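(* Let $\eta\in(0,1)$. With probability one, for every $j$ large enough and every $W\in\Sigma_{\lfloor\eta j\rfloor}$, one has $\#\mathcal S_j(\eta,W)\le j$.
   Context: Fix $d\ge1$. $\Sigma_j$ is the set of words of length $j$ over the alphabet $\{0,1\}^d$ and $\Sigma^*=\bigcup_{j\ge1}\Sigma_j$; for $w=w_1\cdots w_j\in\Sigma_j$ with $w_k=(w_k^{(1)},\dots,w_k^{(d)})$, $I_w=\prod_{i=1}^d[x_w^{(i)},x_w^{(i)}+2^{-j}]$ where $x_w^{(i)}=\sum_{k=1}^jw_k^{(i)}2^{-k}$. Let $(p_w)_{w\in\Sigma^*}$ be independent Bernoulli random variables with $\mathbb P(p_w=1)=2^{-d(1-\eta)|w|}$. Set $\mathcal S_j(\eta)=\{w\in\Sigma_j:p_w=1\}$ and, for $W\in\Sigma^*$, $\mathcal S_j(\eta,W)=\{w\in\mathcal S_j(\eta): I_w\subset I_W\}$. *)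

theory Defs
  imports "HOL-Probability.Probability"
begin

text \<open>A letter of the alphabet {0,1}^d is a list of length d with entries in {0,1};
  a word is a list of letters. Coordinates are indexed by i < d (0-based).\<close>

definition letters :: "nat \<Rightarrow> nat list set" where
  "letters d = {a. length a = d \<and> set a \<subseteq> {0,1}}"

definition Sigma_len :: "nat \<Rightarrow> nat \<Rightarrow> nat list list set" where
  "Sigma_len d j = {w. length w = j \<and> set w \<subseteq> letters d}"

definition Sigma_star :: "nat \<Rightarrow> nat list list set" where
  "Sigma_star d = (\<Union>j\<in>{1..}. Sigma_len d j)"

definition corner :: "nat list list \<Rightarrow> nat \<Rightarrow> real" where
  "corner w i = (\<Sum>k<length w. real ((w ! k) ! i) * 2 powr (- real (k + 1)))"

definition cube :: "nat \<Rightarrow> nat list list \<Rightarrow> (nat \<Rightarrow> real) set" where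
  "cube d w = {x. (\<forall>i<d. corner w i \<le> x i \<and> x i \<le> corner w i + 2 powr (- real (length w)))
                 \<and> (\<forall>i\<ge>d. x i = 0)}"

definition S_set :: "nat \<Rightarrow> (nat list list \<Rightarrow> 'a \<Rightarrow> bool) \<Rightarrow> 'a \<Rightarrow> nat \<Rightarrow> nat list list set" where
  "S_set d p \<omega> j = {w \<in> Sigma_len d j. p w \<omega>}"

definition S_set_in :: "nat \<Rightarrow> (nat list list \<Rightarrow> 'a \<Rightarrow> bool) \<Rightarrow> 'a \<Rightarrow> nat \<Rightarrow> nat list list \<Rightarrow> nat list list set" where
  "S_set_in d p \<omega> j W = {w \<in> S_set d p \<omega> j. cube d w \<subseteq> cube d W}"

end

theory Submission
  imports Defs
begin

text \<open>
  Let \<open>m = \<lfloor>\<eta> j\<rfloor>\<close>. Reading off the integer corner coordinates shows that a cube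
  \<open>I_W\<close> of level \<open>m\<close> contains at most \<open>2^(d(j - m))\<close> cubes of level \<open>j\<close>, and each is
  retained independently with probability \<open>q = 2^(-d(1 - \<eta>) j)\<close>, where
  \<open>2^(d(j - m)) q \<le> 2^d\<close> because \<open>\<eta> j < m + 1\<close>. So the probability that \<open>j + 1\<close> of them
  are retained is at most \<open>(2^d)^(j+1) / (j + 1)!\<close>; a union bound over the \<open>2^(dm)\<close>
  cubes \<open>I_W\<close> leaves the summable bound \<open>2^d 4^(dj) / j!\<close>, and Borel--Cantelli applies.
\<close>

lemma letters_eq: "letters d = {xs. set xs \<subseteq> {0,1} \<and> length xs = d}"
  unfolding letters_def by auto

lemma finite_letters: "finite (letters d)"
  unfolding letters_eq by (simp add: finite_lists_length_eq)

lemma card_letters: "card (letters d) = 2 ^ d"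
  unfolding letters_eq by (simp add: card_lists_length_eq numeral_2_eq_2)

lemma Sigma_len_eq: "Sigma_len d j = {xs. set xs \<subseteq> letters d \<and> length xs = j}"
  unfolding Sigma_len_def by auto

lemma finite_Sigma_len: "finite (Sigma_len d j)"
  unfolding Sigma_len_eq by (simp add: finite_lists_length_eq finite_letters)

lemma card_Sigma_len: "card (Sigma_len d j) = 2 ^ (d * j)"
  unfolding Sigma_len_eq
  by (simp add: card_lists_length_eq finite_letters card_letters power_mult)

lemma Sigma_len_subset_Sigma_star: "1 \<le> j \<Longrightarrow> Sigma_len d j \<subseteq> Sigma_star d"
  unfolding Sigma_star_def by auto

subsection \<open>Integer coordinates of dyadic cubes\<close>

fun dyadic_coord :: "nat list list \<Rightarrow> nat \<Rightarrow> nat" where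
  "dyadic_coord [] i = 0"
| "dyadic_coord (a # w) i = a ! i * 2 ^ length w + dyadic_coord w i"

lemma corner_Cons: "corner (a # w) i = real (a ! i) / 2 + corner w i / 2"
proof -
  have shift: "(2::real) powr (- real (k + 2)) = 2 powr (- real (k + 1)) / 2" for k
  proof -
    have "(2::real) powr (- real (k + 1)) = 2 powr (- real (k + 2)) * 2 powr 1"
      by (subst powr_add [symmetric]) simp
    then show ?thesis by simp
  qed
  have "corner (a # w) i = (\<Sum>k<Suc (length w). real ((a # w) ! k ! i) * 2 powr (- real (k + 1)))"
    unfolding corner_def by simp
  also have "\<dots> = real (a ! i) * 2 powr (-1) + (\<Sum>k<length w. real (w ! k ! i) * 2 powr (- real (k + 2)))"
    by (subst sum.lessThan_Suc_shift) (simp add: add.commute)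
  also have "(\<Sum>k<length w. real (w ! k ! i) * 2 powr (- real (k + 2))) = corner w i / 2"
    unfolding corner_def sum_divide_distrib shift by simp
  finally show ?thesis by (simp add: powr_minus)
qed

lemma corner_eq_dyadic_coord: "corner w i = real (dyadic_coord w i) / 2 ^ length w"
proof (induction w)
  case (Cons a w)
  show ?case unfolding corner_Cons Cons.IH by (simp add: field_simps)
qed (simp add: corner_def)

lemma dyadic_coord_less:
  assumes "set w \<subseteq> letters d" "i < d"
  shows "dyadic_coord w i < 2 ^ length w"
  using assms
proof (induction w)
  case (Cons a w)
  then have "a ! i \<le> 1"
    unfolding letters_def by (auto dest!: nth_mem)
  with Cons show ?case by (cases "a ! i") auto
qed simp

lemma dyadic_coord_inject:
  assumes "set w \<subseteq> letters d" "set v \<subseteq> letters d" "length w = length v"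
    and "\<forall>i<d. dyadic_coord w i = dyadic_coord v i"
  shows "w = v"
  using assms
proof (induction w arbitrary: v)
  case (Cons a w)
  obtain b v' where v: "v = b # v'" and len: "length v' = length w"
    using Cons.prems(3) by (cases v) auto
  have a: "a \<in> letters d" "set w \<subseteq> letters d" and b: "b \<in> letters d" "set v' \<subseteq> letters d"
    using Cons.prems(1,2) v by auto
  have digits: "a ! i = b ! i \<and> dyadic_coord w i = dyadic_coord v' i" if i: "i < d" for i
  proof -
    have eq: "a ! i * 2 ^ length w + dyadic_coord w i = b ! i * 2 ^ length w + dyadic_coord v' i"
      using Cons.prems(4) i v len by auto
    have "a ! i = (a ! i * 2 ^ length w + dyadic_coord w i) div 2 ^ length w"
      using dyadic_coord_less[OF a(2) i] by simp
    also have "\<dots> = b ! i"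
      unfolding eq using dyadic_coord_less[OF b(2) i] len by simp
    finally show ?thesis
      using eq by simp
  qed
  have "a = b"
    using a(1) b(1) digits unfolding letters_def by (auto intro: nth_equalityI)
  moreover have "w = v'"
    using Cons.IH[OF a(2) b(2) len[symmetric]] digits by auto
  ultimately show ?case using v by simp
qed simp

lemma dyadic_coord_subcube:
  assumes W: "W \<in> Sigma_len d m" and w: "w \<in> Sigma_len d j" and "m \<le> j"
    and sub: "cube d w \<subseteq> cube d W" and i: "i < d"
  shows "dyadic_coord w i \<in> {dyadic_coord W i * 2 ^ (j - m) ..< (dyadic_coord W i + 1) * 2 ^ (j - m)}"
proof -
  have lW: "length W = m" and lw: "length w = j"
    using W w unfolding Sigma_len_def by auto
  let ?a = "real (dyadic_coord W i)" and ?b = "real (dyadic_coord w i)"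
  have "(\<lambda>k. if k < d then corner w k else 0) \<in> cube d w"
    and "(\<lambda>k. if k < d then corner w k + 2 powr (- real j) else 0) \<in> cube d w"
    using lw unfolding cube_def by auto
  then have lower: "(\<lambda>k. if k < d then corner w k else 0) \<in> cube d W"
    and upper: "(\<lambda>k. if k < d then corner w k + 2 powr (- real j) else 0) \<in> cube d W"
    using sub by auto
  have pj: "(2::real) ^ j = 2 ^ (j - m) * 2 ^ m"
    using \<open>m \<le> j\<close> by (simp add: power_add [symmetric])
  have "?a / 2 ^ m \<le> ?b / 2 ^ j"
    using lower i unfolding cube_def corner_eq_dyadic_coord lW lw by auto
  then have "?a * 2 ^ (j - m) \<le> ?b"
    unfolding pj by (simp add: field_simps)
  moreover have "(?b + 1) / 2 ^ j \<le> (?a + 1) / 2 ^ m"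
    using upper i unfolding cube_def corner_eq_dyadic_coord lW lw
    by (auto simp: powr_minus powr_realpow divide_inverse algebra_simps)
  then have "(?b + 1) / 2 ^ j * 2 ^ j \<le> (?a + 1) / 2 ^ m * 2 ^ j"
    by (rule mult_right_mono) simp
  then have "?b + 1 \<le> (?a + 1) * 2 ^ (j - m)"
    unfolding pj by simp
  ultimately have "real (dyadic_coord W i * 2 ^ (j - m)) \<le> ?b"
    and "real (dyadic_coord w i + 1) \<le> real ((dyadic_coord W i + 1) * 2 ^ (j - m))"
    by (auto simp: algebra_simps)
  then show ?thesis
    by (simp only: of_nat_le_iff) auto
qed

definition subcubes :: "nat \<Rightarrow> nat \<Rightarrow> nat list list \<Rightarrow> nat list list set" where
  "subcubes d j W = {w \<in> Sigma_len d j. cube d w \<subseteq> cube d W}"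

lemma finite_subcubes: "finite (subcubes d j W)"
  using finite_Sigma_len unfolding subcubes_def by simp

lemma S_set_in_eq_subcubes: "S_set_in d p \<omega> j W = {w \<in> subcubes d j W. p w \<omega>}"
  unfolding S_set_in_def S_set_def subcubes_def by auto

lemma card_subcubes_le:
  assumes W: "W \<in> Sigma_len d m" and "m \<le> j"
  shows "card (subcubes d j W) \<le> 2 ^ (d * (j - m))"
proof -
  let ?coords = "\<lambda>w. restrict (dyadic_coord w) {..<d}"
  let ?box = "PiE {..<d} (\<lambda>i. {dyadic_coord W i * 2 ^ (j - m) ..< (dyadic_coord W i + 1) * 2 ^ (j - m)})"
  have inj: "inj_on ?coords (subcubes d j W)"
  proof (rule inj_onI)
    fix w v assume "w \<in> subcubes d j W" "v \<in> subcubes d j W" "?coords w = ?coords v"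
    then show "w = v"
      by (intro dyadic_coord_inject[of w d v])
        (auto simp: subcubes_def Sigma_len_def fun_eq_iff split: if_splits)
  qed
  have into_box: "?coords ` subcubes d j W \<subseteq> ?box"
  proof (rule image_subsetI)
    fix w assume "w \<in> subcubes d j W"
    then show "?coords w \<in> ?box"
      using dyadic_coord_subcube[OF W _ \<open>m \<le> j\<close>] unfolding PiE_iff
      by (auto simp: subcubes_def)
  qed
  have "card (subcubes d j W) \<le> card ?box"
    using card_inj_on_le[OF inj into_box] by (simp add: finite_PiE)
  also have "card ?box = 2 ^ (d * (j - m))"
    by (simp add: card_PiE power_mult [symmetric] mult.commute)
  finally show ?thesis .
qed

subsection \<open>Many successes among independent events\<close>

lemma binomial_mult_power_le:
  fixes q :: real
  assumes "0 \<le> q"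
  shows "real (n choose k) * q ^ k \<le> (real n * q) ^ k / fact k"
proof -
  have "real (n choose k) * fact k \<le> real n ^ k"
    by (metis binomial_fact_pow of_nat_fact of_nat_le_iff of_nat_mult of_nat_power)
  then have "real (n choose k) \<le> real n ^ k / fact k"
    by (simp add: pos_le_divide_eq)
  then have "real (n choose k) * q ^ k \<le> real n ^ k / fact k * q ^ k"
    using assms by (intro mult_right_mono) auto
  then show ?thesis
    by (simp add: power_mult_distrib)
qed

lemma Collect_card_ge_eq_UN_subsets:
  assumes "finite A"
  shows "{\<omega> \<in> S. k \<le> card {i \<in> A. P i \<omega>}}
       = (\<Union>B \<in> {B. B \<subseteq> A \<and> card B = k}. {\<omega> \<in> S. \<forall>i\<in>B. P i \<omega>})"
proof (intro equalityI subsetI)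
  fix \<omega> assume "\<omega> \<in> {\<omega> \<in> S. k \<le> card {i \<in> A. P i \<omega>}}"
  then show "\<omega> \<in> (\<Union>B \<in> {B. B \<subseteq> A \<and> card B = k}. {\<omega> \<in> S. \<forall>i\<in>B. P i \<omega>})"
    by (auto elim!: obtain_subset_with_card_n)
next
  fix \<omega> assume "\<omega> \<in> (\<Union>B \<in> {B. B \<subseteq> A \<and> card B = k}. {\<omega> \<in> S. \<forall>i\<in>B. P i \<omega>})"
  then obtain B where "B \<subseteq> {i \<in> A. P i \<omega>}" "card B = k" "\<omega> \<in> S"
    by auto
  with assms show "\<omega> \<in> {\<omega> \<in> S. k \<le> card {i \<in> A. P i \<omega>}}"
    by (auto dest: card_mono[rotated])
qed

lemma (in prob_space)
  assumes indep: "indep_vars (\<lambda>_. count_space UNIV) X I"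
    and A: "A \<subseteq> I" "finite A"
    and prob_X: "\<And>i. i \<in> A \<Longrightarrow> prob {\<omega> \<in> space M. X i \<omega>} \<le> q" and "0 \<le> q"
  shows events_card_ge: "{\<omega> \<in> space M. k \<le> card {i \<in> A. X i \<omega>}} \<in> events"
    and prob_card_ge_le: "prob {\<omega> \<in> space M. k \<le> card {i \<in> A. X i \<omega>}} \<le> (real (card A) * q) ^ k / fact k"
proof -
  let ?E = "\<lambda>i. {\<omega> \<in> space M. X i \<omega>}"
  let ?Bs = "{B. B \<subseteq> A \<and> card B = k}"
  have E_eq: "?E i = X i -` {True} \<inter> space M" for i
    by auto
  have indep_sets: "indep_sets (\<lambda>i. {X i -` B \<inter> space M | B. B \<in> sets (count_space UNIV)}) I"
    and measurable_X: "\<And>i. i \<in> I \<Longrightarrow> X i \<in> measurable M (count_space UNIV)"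
    using indep unfolding indep_vars_def2 by auto
  have E_events: "?E i \<in> events" if "i \<in> I" for i
    using measurable_sets[OF measurable_X[OF that]] unfolding E_eq by simp
  have finite_Bs: "finite ?Bs"
    using finite_subset[of ?Bs "Pow A"] A(2) by blast
  have inter_events: "{\<omega> \<in> space M. \<forall>i\<in>B. X i \<omega>} \<in> events" if B: "B \<in> ?Bs" for B
  proof (rule sets.sets_Collect_finite_All)
    show "finite B"
      using B A(2) finite_subset by blast
    show "?E i \<in> events" if "i \<in> B" for i
      using that B A(1) E_events by blast
  qed
  show "{\<omega> \<in> space M. k \<le> card {i \<in> A. X i \<omega>}} \<in> events"
    unfolding Collect_card_ge_eq_UN_subsets[OF A(2)] by (rule sets.finite_UN[OF finite_Bs inter_events])
  show "prob {\<omega> \<in> space M. k \<le> card {i \<in> A. X i \<omega>}} \<le> (real (card A) * q) ^ k / fact k"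
  proof (cases "k = 0")
    case True
    then show ?thesis by simp
  next
    case False
    have prob_inter: "prob {\<omega> \<in> space M. \<forall>i\<in>B. X i \<omega>} \<le> q ^ k" if B: "B \<in> ?Bs" for B
    proof -
      have finite_B: "finite B"
        using B A(2) finite_subset by blast
      have nonempty_B: "B \<noteq> {}"
        using B False by auto
      have "prob (\<Inter>i\<in>B. ?E i) = (\<Prod>i\<in>B. prob (?E i))"
      proof (rule indep_setsD[OF indep_sets _ nonempty_B finite_B])
        show "B \<subseteq> I"
          using B A(1) by auto
        show "\<forall>i\<in>B. ?E i \<in> {X i -` C \<inter> space M | C. C \<in> sets (count_space UNIV)}"
          unfolding E_eq by (intro ballI CollectI exI[of _ "{True}"]) simp
      qed
      also have "\<dots> \<le> (\<Prod>i\<in>B. q)"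
        using B prob_X by (intro prod_mono) auto
      moreover have "{\<omega> \<in> space M. \<forall>i\<in>B. X i \<omega>} = (\<Inter>i\<in>B. ?E i)"
        using nonempty_B by auto
      ultimately show ?thesis
        using B by simp
    qed
    have "prob {\<omega> \<in> space M. k \<le> card {i \<in> A. X i \<omega>}}
        \<le> (\<Sum>B\<in>?Bs. prob {\<omega> \<in> space M. \<forall>i\<in>B. X i \<omega>})"
      unfolding Collect_card_ge_eq_UN_subsets[OF A(2)]
      using finite_Bs inter_events by (intro finite_measure_subadditive_finite) blast+
    also have "\<dots> \<le> (\<Sum>B\<in>?Bs. q ^ k)"
      by (intro sum_mono prob_inter)
    also have "\<dots> = real (card A choose k) * q ^ k"
      using A(2) by (simp add: n_subsets)
    also have "\<dots> \<le> (real (card A) * q) ^ k / fact k"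
      by (rule binomial_mult_power_le) fact
    finally show ?thesis .
  qed
qed

subsection \<open>The crowded levels\<close>

lemma nat_floor_mult_le:
  fixes \<eta> :: real
  assumes "0 \<le> \<eta>" "\<eta> \<le> 1"
  shows "nat \<lfloor>\<eta> * real j\<rfloor> \<le> j"
proof -
  have "\<eta> * real j \<le> real j"
    using assms by (simp add: mult_left_le_one_le)
  then show ?thesis
    by linarith
qed

lemma subcube_count_mult_retention_le:
  fixes \<eta> :: real and d j :: nat
  assumes "0 < \<eta>" "\<eta> < 1"
  defines "m \<equiv> nat \<lfloor>\<eta> * real j\<rfloor>"
  shows "(2::real) ^ (d * (j - m)) * 2 powr (- (real d * (1 - \<eta>) * real j)) \<le> 2 ^ d"
proof -
  have m_le: "m \<le> j"
    unfolding m_def using assms by (intro nat_floor_mult_le) auto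
  have floor: "\<eta> * real j < real m + 1"
    unfolding m_def using assms by linarith
  have "(2::real) ^ (d * (j - m)) * 2 powr (- (real d * (1 - \<eta>) * real j))
      = 2 powr (real d * (\<eta> * real j - real m))"
    using m_le by (simp add: powr_realpow [symmetric] of_nat_diff powr_add [symmetric] algebra_simps)
  also have "\<dots> \<le> 2 powr real d"
    using floor by (intro powr_mono mult_left_le) auto
  finally show ?thesis
    by (simp add: powr_realpow)
qed

lemma level_sum_le:
  assumes "m \<le> j"
  shows "real (2 ^ (d * m)) * ((2 ^ d) ^ Suc j / fact (Suc j)) \<le> (2::real) ^ d * (4 ^ d) ^ j / fact j"
proof -
  have "real (2 ^ (d * m)) * ((2 ^ d) ^ Suc j / fact (Suc j))
      \<le> 2 ^ (d * j) * ((2 ^ d) ^ Suc j / fact (Suc j))"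
    using assms by (intro mult_right_mono) (auto simp: power_increasing)
  also have "\<dots> = 2 ^ d * (4 ^ d) ^ j / fact (Suc j)"
  proof -
    have exponent: "d * j + d * Suc j = d + (2 * d) * j"
      by (simp add: algebra_simps)
    have "(2::real) ^ (d * j) * (2 ^ d) ^ Suc j = 2 ^ (d * j + d * Suc j)"
      by (simp add: power_add power_mult)
    also have "\<dots> = 2 ^ d * (4 ^ d) ^ j"
      unfolding exponent by (simp add: power_add power_mult)
    finally show ?thesis
      by simp
  qed
  also have "\<dots> \<le> 2 ^ d * (4 ^ d) ^ j / fact j"
    by (intro divide_left_mono) (auto simp: fact_mono)
  finally show ?thesis .
qed

lemma (in prob_space)
  assumes indep: "indep_vars (\<lambda>_. count_space UNIV) p (Sigma_star d)"
    and prob_p: "\<And>w. w \<in> Sigma_star d \<Longrightarrow>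
           prob {\<omega> \<in> space M. p w \<omega>} = 2 powr (- (real d * (1 - \<eta>) * real (length w)))"
    and \<eta>: "0 < \<eta>" "\<eta> < 1" and "1 \<le> j"
  defines "crowded \<equiv> {\<omega> \<in> space M.
             \<exists>W \<in> Sigma_len d (nat \<lfloor>\<eta> * real j\<rfloor>). j < card (S_set_in d p \<omega> j W)}"
  shows events_crowded: "crowded \<in> events"
    and prob_crowded_le: "prob crowded \<le> 2 ^ d * (4 ^ d) ^ j / fact j"
proof -
  let ?m = "nat \<lfloor>\<eta> * real j\<rfloor>"
  let ?q = "2 powr (- (real d * (1 - \<eta>) * real j)) :: real"
  let ?F = "\<lambda>W. {\<omega> \<in> space M. Suc j \<le> card {w \<in> subcubes d j W. p w \<omega>}}"
  have m_le: "?m \<le> j"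
    using \<eta> by (intro nat_floor_mult_le) auto
  have crowded_eq: "crowded = (\<Union>W \<in> Sigma_len d ?m. ?F W)"
    unfolding crowded_def S_set_in_eq_subcubes by (auto simp: Suc_le_eq)
  have subcubes_star: "subcubes d j W \<subseteq> Sigma_star d" for W
    using Sigma_len_subset_Sigma_star[OF \<open>1 \<le> j\<close>] by (auto simp: subcubes_def)
  have prob_subcube: "prob {\<omega> \<in> space M. p w \<omega>} \<le> ?q" if w: "w \<in> subcubes d j W" for w W
  proof -
    have "w \<in> Sigma_star d" "length w = j"
      using w subcubes_star by (auto simp: subcubes_def Sigma_len_def)
    then show ?thesis
      using prob_p by simp
  qed
  have F_events: "?F W \<in> events" for W
    by (rule events_card_ge[OF indep subcubes_star finite_subcubes prob_subcube]) simp_all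
  show "crowded \<in> events"
    unfolding crowded_eq using F_events finite_Sigma_len by auto
  have prob_F: "prob (?F W) \<le> (2 ^ d) ^ Suc j / fact (Suc j)" if W: "W \<in> Sigma_len d ?m" for W
  proof -
    have "real (card (subcubes d j W)) * ?q \<le> 2 ^ (d * (j - ?m)) * ?q"
      using card_subcubes_le[OF W m_le] by (intro mult_right_mono) (simp_all flip: of_nat_le_iff)
    also have "\<dots> \<le> 2 ^ d"
      using subcube_count_mult_retention_le[OF \<eta>] .
    finally have "(real (card (subcubes d j W)) * ?q) ^ Suc j \<le> (2 ^ d) ^ Suc j"
      by (intro power_mono) auto
    moreover have "prob (?F W) \<le> (real (card (subcubes d j W)) * ?q) ^ Suc j / fact (Suc j)"
      by (rule prob_card_ge_le[OF indep subcubes_star finite_subcubes prob_subcube]) simp_all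
    ultimately show ?thesis
      by (smt (verit) divide_right_mono fact_ge_zero)
  qed
  have "prob crowded \<le> (\<Sum>W \<in> Sigma_len d ?m. prob (?F W))"
    unfolding crowded_eq using F_events finite_Sigma_len
    by (intro finite_measure_subadditive_finite) auto
  also have "\<dots> \<le> (\<Sum>W \<in> Sigma_len d ?m. (2 ^ d) ^ Suc j / fact (Suc j))"
    using prob_F by (rule sum_mono)
  also have "\<dots> = real (2 ^ (d * ?m)) * ((2 ^ d) ^ Suc j / fact (Suc j))"
    by (simp add: card_Sigma_len)
  also have "\<dots> \<le> 2 ^ d * (4 ^ d) ^ j / fact j"
    using level_sum_le[OF m_le] .
  finally show "prob crowded \<le> 2 ^ d * (4 ^ d) ^ j / fact j" .
qed

theorem lemma3:
  fixes M :: "'a measure" and d :: nat and \<eta> :: real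
    and p :: "nat list list \<Rightarrow> 'a \<Rightarrow> bool"
  assumes "prob_space M"
    and "d \<ge> 1"
    and "0 < \<eta>" and "\<eta> < 1"
    and "prob_space.indep_vars M (\<lambda>_. count_space UNIV) p (Sigma_star d)"
    and "\<And>w. w \<in> Sigma_star d \<Longrightarrow>
           measure M {\<omega> \<in> space M. p w \<omega>} = 2 powr (- (real d * (1 - \<eta>) * real (length w)))"
  shows "AE \<omega> in M. \<exists>J. \<forall>j\<ge>J. \<forall>W \<in> Sigma_len d (nat \<lfloor>\<eta> * real j\<rfloor>).
           card (S_set_in d p \<omega> j W) \<le> j"
proof -
  interpret prob_space M by fact
  define crowded where "crowded j = {\<omega> \<in> space M.
    \<exists>W \<in> Sigma_len d (nat \<lfloor>\<eta> * real j\<rfloor>). j < card (S_set_in d p \<omega> j W)}" for j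
  have crowded_events: "crowded (Suc n) \<in> events" for n
    unfolding crowded_def by (rule events_crowded[OF assms(5,6,3,4)]) simp_all
  have prob_crowded: "prob (crowded (Suc n)) \<le> 2 ^ d * (4 ^ d) ^ Suc n / fact (Suc n)" for n
    unfolding crowded_def by (rule prob_crowded_le[OF assms(5,6,3,4)]) simp_all
  have "summable (\<lambda>n. (2::real) ^ d * (4 ^ d) ^ Suc n / fact (Suc n))"
    using summable_mult[OF summable_exp[of "4 ^ d"], of "2 ^ d"]
    by (subst summable_Suc_iff) (simp add: divide_inverse mult_ac)
  then have "summable (\<lambda>n. prob (crowded (Suc n)))"
    by (rule summable_comparison_test'[where N = 0]) (simp only: real_norm_def abs_of_nonneg[OF measure_nonneg] prob_crowded)
  then have "AE \<omega> in M. eventually (\<lambda>n. \<omega> \<in> space M - crowded (Suc n)) sequentially"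
    by (intro borel_cantelli_AE1 crowded_events) (simp_all add: less_top [symmetric])
  then show ?thesis
  proof (rule AE_mp, intro AE_I2 impI)
    fix \<omega> assume "eventually (\<lambda>n. \<omega> \<in> space M - crowded (Suc n)) sequentially"
    then obtain N where N: "\<And>n. N \<le> n \<Longrightarrow> \<omega> \<in> space M - crowded (Suc n)"
      unfolding eventually_sequentially by blast
    show "\<exists>J. \<forall>j\<ge>J. \<forall>W \<in> Sigma_len d (nat \<lfloor>\<eta> * real j\<rfloor>). card (S_set_in d p \<omega> j W) \<le> j"
    proof (intro exI allI impI ballI)
      fix j W assume "Suc N \<le> j" and W: "W \<in> Sigma_len d (nat \<lfloor>\<eta> * real j\<rfloor>)"
      then obtain n where "j = Suc n" "N \<le> n"
        by (cases j) auto
      then have "\<omega> \<in> space M" "\<omega> \<notin> crowded j"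
        using N by auto
      then have "\<not> j < card (S_set_in d p \<omega> j W)"
        using W unfolding crowded_def by blast
      then show "card (S_set_in d p \<omega> j W) \<le> j"
        by simp
    qed
  qed
qed

end
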